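(* Fix a distribution of $(X,Y)$ on $\mathcal{X}\times\{0,1\}$ with expectation $\mathbb{E}$, let $\mathcal{L}(F,y)=-[y\log\mu(F)+(1-y)\log(1-\mu(F))]$ be the log loss with $\mu(F)=1/(1+e^{-F})$, and let $\mathcal{H}$ be a set of group membership functions $h:\mathcal{X}\to\{0,1\}$. Let $F_T,F_{T+1}:\mathcal{X}\to\mathbb{R}$ be logit predictors, $f_T=\mu\circ F_T$, and let $\mathcal{W}$ be a class of weak learners $\phi:\mathcal{X}\times[0,1]\to\mathbb{R}$ such that for every $h\in\mathcal{H}$ and $g\in\mathcal{G}$ the function $(x,v)\mapsto h(x)g(v)$ belongs to $\mathcal{W}$. Define $\mathcal{L}^*_T=\inf\big\{\mathbb{E}[\mathcal{L}(F_T(X)+\sum_{k=1}^K w_k\phi_k(X,f_T(X)),Y)] : K\in\mathbb{N},\ w\in\mathbb{R}^K,\ \phi_1,\dots,\phi_K\in\mathcal{W}\big\}$, $\epsilon_T=\mathbb{E}[\mathcal{L}(F_{T+1}(X),Y)]-\mathcal{L}^*_T$, and $$C_T^2=\max_{h\in\mathcal{H},\,g\in\mathcal{G}}\frac{\mathbb{E}[g(f_T(X))\mid h(X)=1]}{\mathbb{E}[f_T(X)(1-f_T(X))\mid h(X)=1]}.$$ Then $f_T$ is $\alpha$-multicalibrated with respect to $\mathcal{H}$ for $$\alpha=\frac{2}{\sqrt3}\,C_T\sqrt{2\,\mathbb{E}[|F_{T+1}(X)-F_T(X)|]+\tfrac18\,\mathbb{E}[(F_{T+1}(X)-F_T(X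))^2]+\epsilon_T}.$$
   Context: $\mathcal{G}$ is the set of interval membership functions $g:[0,1]\to\{0,1\}$, $g(v)=\mathbb{1}_I(v)$ for an interval $I\subseteq[0,1]$. A probabilistic predictor $f$ is $\alpha$-multicalibrated with respect to $\mathcal{H}$ if $\big|\mathbb{E}[h(X)g(f(X))(Y-f(X))]\big|\le\alpha\sqrt{\mathbb{E}[h(X)f(X)(1-f(X))]}$ for all $h\in\mathcal{H}$, $g\in\mathcal{G}$. In the paper, $F_{T+1}$ is obtained from $F_T$ by gradient boosting with weak learners in $\mathcal{W}$ (regression trees on the features augmented with $f_T(x)$), and $\mathcal{L}^*_T$ is the loss of the optimal combination of weak learners added to $F_T$. *)

theory Defs
  imports "HOL-Probability.Probability"
begin

definition sigmoid :: "real \<Rightarrow> real" where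
  "sigmoid F = 1 / (1 + exp (- F))"

definition logloss :: "real \<Rightarrow> real \<Rightarrow> real" where
  "logloss F y = - (y * ln (sigmoid F) + (1 - y) * ln (1 - sigmoid F))"

definition interval_fns :: "(real \<Rightarrow> real) set" where
  "interval_fns = {g. \<exists>I. I \<subseteq> {0..1} \<and> is_interval I \<and> g = indicator I}"

definition multicalibrated ::
  "'w measure \<Rightarrow> ('w \<Rightarrow> 'a) \<Rightarrow> ('w \<Rightarrow> real) \<Rightarrow> ('a \<Rightarrow> real) set \<Rightarrow> ('a \<Rightarrow> real) \<Rightarrow> real \<Rightarrow> bool" where
  "multicalibrated M X Y H f \<alpha> \<longleftrightarrow>
     (\<forall>h\<in>H. \<forall>g\<in>interval_fns.
        \<bar>\<integral>\<omega>. h (X \<omega>) * g (f (X \<omega>)) * (Y \<omega> - f (X \<omega>)) \<partial>M\<bar>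
          \<le> \<alpha> * sqrt (\<integral>\<omega>. h (X \<omega>) * f (X \<omega>) * (1 - f (X \<omega>)) \<partial>M))"

text \<open>Expected log loss (the loss is nonnegative, so use the nonnegative integral).\<close>
definition exp_loss :: "'w measure \<Rightarrow> ('w \<Rightarrow> real) \<Rightarrow> ('w \<Rightarrow> real) \<Rightarrow> ennreal" where
  "exp_loss M G Y = (\<integral>\<^sup>+\<omega>. ennreal (logloss (G \<omega>) (Y \<omega>)) \<partial>M)"

definition opt_loss ::
  "'w measure \<Rightarrow> ('w \<Rightarrow> 'a) \<Rightarrow> ('w \<Rightarrow> real) \<Rightarrow> ('a \<Rightarrow> real) \<Rightarrow> ('a \<Rightarrow> real \<Rightarrow> real) set \<Rightarrow> ennreal" where
  "opt_loss M X Y F W =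
     Inf {exp_loss M (\<lambda>\<omega>. F (X \<omega>) + (\<Sum>k<K. w k * \<phi> k (X \<omega>) (sigmoid (F (X \<omega>))))) Y
          | (K::nat) (w::nat \<Rightarrow> real) \<phi>. \<forall>k<K. \<phi> k \<in> W}"

definition cond_exp_event :: "'w measure \<Rightarrow> ('w \<Rightarrow> real) \<Rightarrow> 'w set \<Rightarrow> real" where
  "cond_exp_event M A E = (\<integral>\<omega>. A \<omega> * indicator E \<omega> \<partial>M) / measure M E"

definition CT_ratios ::
  "'w measure \<Rightarrow> ('w \<Rightarrow> 'a) \<Rightarrow> ('a \<Rightarrow> real) set \<Rightarrow> ('a \<Rightarrow> real) \<Rightarrow> real set" where
  "CT_ratios M X H f =
     {cond_exp_event M (\<lambda>\<omega>. g (f (X \<omega>))) {\<omega>\<in>space M. h (X \<omega>) = 1}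
      / cond_exp_event M (\<lambda>\<omega>. f (X \<omega>) * (1 - f (X \<omega>))) {\<omega>\<in>space M. h (X \<omega>) = 1}
      | h g. h \<in> H \<and> g \<in> interval_fns}"

end

theory Submission
  imports Defs
begin

(* Hoeffding's lemma for a Bernoulli variable gives the quadratic upper bound
   logloss (F + t) y <= logloss F y - t (y - sigmoid F) + t^2/8.
   Adding c times the weak learner (x, v) |-> h x * g v to F_T therefore lowers the expected
   loss by at least c beta - c^2 p / 8, where beta is the calibration error of f_T on (h, g)
   and p = E[h(X) g(f_T(X))]; optimizing over c gives beta^2 <= p (L(F_T) - L*_T) / 2.
   The log loss is 1-Lipschitz in the logit, so L(F_T) - L*_T <= E|F_{T+1} - F_T| + eps_T,
   and p <= C_T^2 E[h(X) f_T(X) (1 - f_T(X))] by the definition of C_T. *)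

lemma sigmoid_eq_exp_div: "sigmoid F = exp F / (1 + exp F)"
  unfolding sigmoid_def by (simp add: exp_minus field_simps add_pos_pos)

lemma one_minus_sigmoid: "1 - sigmoid F = 1 / (1 + exp F)"
proof -
  have "0 < 1 + exp F" by (simp add: add_pos_pos)
  then show ?thesis by (simp add: sigmoid_eq_exp_div field_simps)
qed

lemma sigmoid_gt_zero: "0 < sigmoid F"
  unfolding sigmoid_eq_exp_div by (simp add: add_pos_pos)

lemma sigmoid_less_one: "sigmoid F < 1"
proof -
  have "0 < 1 / (1 + exp F)" by (simp add: add_pos_pos)
  then show ?thesis using one_minus_sigmoid[of F] by linarith
qed

lemma logloss_eq: "logloss F y = ln (1 + exp F) - y * F"
proof -
  have pos: "0 < 1 + exp F" by (simp add: add_pos_pos)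
  have "ln (sigmoid F) = F - ln (1 + exp F)"
    using pos by (simp add: sigmoid_eq_exp_div ln_div)
  moreover have "ln (1 - sigmoid F) = - ln (1 + exp F)"
    using pos by (simp add: one_minus_sigmoid ln_div)
  ultimately show ?thesis
    unfolding logloss_def by (simp only:) (simp add: algebra_simps)
qed

lemma ln_one_plus_exp_add:
  "ln (1 + exp (F + t)) = ln (1 + exp F) + ln (1 - sigmoid F + sigmoid F * exp t)"
proof -
  have pos: "0 < 1 + exp F" "0 < 1 + exp (F + t)" by (simp_all add: add_pos_pos)
  have "1 - sigmoid F + sigmoid F * exp t = (1 + exp (F + t)) / (1 + exp F)"
    using pos by (simp add: sigmoid_eq_exp_div field_simps exp_add)
  then show ?thesis
    using pos by (simp add: ln_div)
qed

lemma logloss_add: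
  "logloss (F + t) y = logloss F y + ln (1 - sigmoid F + sigmoid F * exp t) - y * t"
  by (simp add: logloss_eq ln_one_plus_exp_add algebra_simps)

lemma ln_bernoulli_mgf_le:
  fixes p t :: real
  assumes "0 \<le> p" "p \<le> 1"
  shows "ln (1 - p + p * exp t) \<le> t * p + t\<^sup>2 / 8"
proof (cases "0 \<le> t")
  case True
  from Hoeffdings_lemma_aux[OF True assms(1)] show ?thesis
    by (simp add: algebra_simps)
next
  case False
  have "0 \<le> - t" "0 \<le> 1 - p" using False assms by simp_all
  from Hoeffdings_lemma_aux[OF this]
  have reflected: "ln (p + (1 - p) * exp (- t)) \<le> - t * (1 - p) + t\<^sup>2 / 8"
    by (simp add: algebra_simps)
  have "0 < p + (1 - p) * exp (- t)"
    using assms by (cases "p = 0") (auto intro: add_pos_nonneg)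
  moreover have "1 - p + p * exp t = exp t * (p + (1 - p) * exp (- t))"
    by (simp add: algebra_simps flip: exp_add)
  ultimately have "ln (1 - p + p * exp t) = t + ln (p + (1 - p) * exp (- t))"
    by (simp add: ln_mult_pos)
  with reflected show ?thesis by (simp add: algebra_simps)
qed

lemma ln_bernoulli_mgf_bounds:
  fixes p t :: real
  assumes "0 \<le> p" "p \<le> 1" "0 \<le> t"
  shows "0 \<le> ln (1 - p + p * exp t)" "ln (1 - p + p * exp t) \<le> t"
proof -
  have "p * 1 \<le> p * exp t" using assms by (intro mult_left_mono) auto
  then show "0 \<le> ln (1 - p + p * exp t)" by simp
  have "(1 - p) * 1 \<le> (1 - p) * exp t" using assms by (intro mult_left_mono) auto
  then have "1 - p + p * exp t \<le> exp t" by (simp add: algebra_simps)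
  moreover have "0 < 1 - p + p * exp t" using \<open>p * 1 \<le> p * exp t\<close> by simp
  ultimately show "ln (1 - p + p * exp t) \<le> t"
    by (metis ln_exp ln_le_cancel_iff exp_gt_zero)
qed

lemma logloss_add_le: "logloss (F + t) y \<le> logloss F y - t * (y - sigmoid F) + t\<^sup>2 / 8"
  using ln_bernoulli_mgf_le[of "sigmoid F" t] sigmoid_gt_zero[of F] sigmoid_less_one[of F]
  by (simp add: logloss_add algebra_simps)

lemma logloss_lipschitz:
  assumes "0 \<le> y" "y \<le> 1"
  shows "\<bar>logloss a y - logloss b y\<bar> \<le> \<bar>a - b\<bar>"
proof -
  have shift: "\<bar>logloss (F + t) y - logloss F y\<bar> \<le> t" if "0 \<le> t" for F t
  proof -
    define l where "l = ln (1 - sigmoid F + sigmoid F * exp t)"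
    have "0 \<le> l" "l \<le> t"
      unfolding l_def using sigmoid_gt_zero[of F] sigmoid_less_one[of F] that
      by (intro ln_bernoulli_mgf_bounds; simp)+
    moreover have "0 \<le> y * t" "y * t \<le> t"
      using assms that by (simp_all add: mult_left_le_one_le)
    ultimately show ?thesis
      by (simp add: logloss_add flip: l_def)
  qed
  show ?thesis
    using shift[of "a - b" b] shift[of "b - a" a] by (cases "b \<le> a") auto
qed

lemma logloss_nonneg:
  assumes "0 \<le> y" "y \<le> 1"
  shows "0 \<le> logloss F y"
proof -
  have "0 \<le> ln (1 + exp F)" "F \<le> ln (1 + exp F)"
    using ln_le_cancel_iff[of "exp F" "1 + exp F"] by (simp_all add: add_pos_pos)
  moreover have "y * F \<le> max 0 F"
    using assms mult_left_le_one_le[of F y] mult_nonneg_nonpos[of y F] by (cases "0 \<le> F") auto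
  ultimately show ?thesis
    unfolding logloss_eq by linarith
qed

lemma sigmoid_borel [measurable (raw)]:
  "f \<in> borel_measurable M \<Longrightarrow> (\<lambda>x. sigmoid (f x)) \<in> borel_measurable M"
  unfolding sigmoid_def by measurable

lemma logloss_borel [measurable (raw)]:
  assumes [measurable]: "f \<in> borel_measurable M" "y \<in> borel_measurable M"
  shows "(\<lambda>x. logloss (f x) (y x)) \<in> borel_measurable M"
  unfolding logloss_def by measurable

lemma interval_fns_borel: "g \<in> interval_fns \<Longrightarrow> g \<in> borel_measurable borel"
proof -
  assume "g \<in> interval_fns"
  then obtain I where "is_interval I" "g = indicator I"
    unfolding interval_fns_def by blast
  then show ?thesis
    using real_interval_borel_measurable[of I] by simp
qed

lemma interval_fns_range: "g \<in> interval_fns \<Longrightarrow> g v \<in> {0, 1}"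
  by (auto simp: interval_fns_def indicator_def)

lemma sq_le_of_quadratic_bound:
  fixes m a b p :: real
  assumes bound: "\<And>c. m \<le> a - c * b + c\<^sup>2 / 8 * p" and "0 \<le> p"
  shows "b\<^sup>2 \<le> p * (a - m) / 2"
proof (cases "p = 0")
  case True
  have "b = 0"
  proof (rule ccontr)
    assume "b \<noteq> 0"
    then show False
      using bound[of "(a - m + 1) / b"] True by simp
  qed
  then show ?thesis using True by simp
next
  case False
  with \<open>0 \<le> p\<close> have "0 < p" by simp
  have "m \<le> a - 2 * b\<^sup>2 / p"
    using bound[of "4 * b / p"] \<open>0 < p\<close> by (simp add: field_simps power2_eq_square)
  with \<open>0 < p\<close> show ?thesis by (simp add: field_simps)
qed

lemma integrable_logloss:
  assumes [measurable]: "G \<in> borel_measurable M" "Y \<in> borel_measurable M"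
    and Y: "\<forall>\<omega>\<in>space M. Y \<omega> \<in> {0..1}" and finite: "exp_loss M G Y < \<infinity>"
  shows "integrable M (\<lambda>\<omega>. logloss (G \<omega>) (Y \<omega>))"
  using finite Y by (intro integrableI_nonneg) (auto simp: exp_loss_def logloss_nonneg intro!: AE_I2)

lemma enn2real_exp_loss:
  assumes [measurable]: "G \<in> borel_measurable M" "Y \<in> borel_measurable M"
    and Y: "\<forall>\<omega>\<in>space M. Y \<omega> \<in> {0..1}" and finite: "exp_loss M G Y < \<infinity>"
  shows "enn2real (exp_loss M G Y) = (\<integral>\<omega>. logloss (G \<omega>) (Y \<omega>) \<partial>M)"
  unfolding exp_loss_def
  using Y by (subst nn_integral_eq_integral[OF integrable_logloss[OF assms]])
    (auto simp: logloss_nonneg intro!: AE_I2 integral_nonneg)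

lemma exp_loss_diff_le:
  assumes [measurable]: "G \<in> borel_measurable M" "G' \<in> borel_measurable M" "Y \<in> borel_measurable M"
    and Y: "\<forall>\<omega>\<in>space M. Y \<omega> \<in> {0..1}"
    and finite: "exp_loss M G Y < \<infinity>" "exp_loss M G' Y < \<infinity>"
    and "integrable M (\<lambda>\<omega>. G' \<omega> - G \<omega>)"
  shows "enn2real (exp_loss M G Y) - enn2real (exp_loss M G' Y) \<le> (\<integral>\<omega>. \<bar>G' \<omega> - G \<omega>\<bar> \<partial>M)"
proof -
  note int = integrable_logloss[OF _ _ Y finite(1)] integrable_logloss[OF _ _ Y finite(2)]
  have "enn2real (exp_loss M G Y) - enn2real (exp_loss M G' Y)
      = (\<integral>\<omega>. logloss (G \<omega>) (Y \<omega>) - logloss (G' \<omega>) (Y \<omega>) \<partial>M)"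
    using int by (simp add: enn2real_exp_loss[OF _ _ Y finite(1)] enn2real_exp_loss[OF _ _ Y finite(2)])
  also have "\<dots> \<le> (\<integral>\<omega>. \<bar>G' \<omega> - G \<omega>\<bar> \<partial>M)"
  proof (intro integral_mono)
    fix \<omega> assume "\<omega> \<in> space M"
    then have "\<bar>logloss (G \<omega>) (Y \<omega>) - logloss (G' \<omega>) (Y \<omega>)\<bar> \<le> \<bar>G \<omega> - G' \<omega>\<bar>"
      using Y by (intro logloss_lipschitz) auto
    then show "logloss (G \<omega>) (Y \<omega>) - logloss (G' \<omega>) (Y \<omega>) \<le> \<bar>G' \<omega> - G \<omega>\<bar>"
      by linarith
  qed (use int assms(7) in auto)
  finally show ?thesis .
qed

lemma opt_loss_le_exp_loss: "opt_loss M X Y F W \<le> exp_loss M (\<lambda>\<omega>. F (X \<omega>)) Y"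
  unfolding opt_loss_def by (rule Inf_lower) (auto intro!: exI[of _ 0])

lemma opt_loss_le_exp_loss_add_learner:
  assumes "\<phi> \<in> W"
  shows "opt_loss M X Y F W \<le> exp_loss M (\<lambda>\<omega>. F (X \<omega>) + c * \<phi> (X \<omega>) (sigmoid (F (X \<omega>)))) Y"
  unfolding opt_loss_def
  using assms by (intro Inf_lower) (auto intro!: exI[of _ 1] exI[of _ "\<lambda>_. c"] exI[of _ "\<lambda>_. \<phi>"])

lemma (in prob_space) exp_loss_add_le:
  fixes c :: real
  assumes [measurable]: "G \<in> borel_measurable M" "Y \<in> borel_measurable M" "u \<in> borel_measurable M"
    and Y: "\<forall>\<omega>\<in>space M. Y \<omega> \<in> {0..1}" and u: "\<forall>\<omega>\<in>space M. u \<omega> \<in> {0..1}"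
    and finite: "exp_loss M G Y < \<infinity>"
  defines "r \<equiv> enn2real (exp_loss M G Y) - c * (\<integral>\<omega>. u \<omega> * (Y \<omega> - sigmoid (G \<omega>)) \<partial>M)
                + c\<^sup>2 / 8 * (\<integral>\<omega>. u \<omega> \<partial>M)"
  shows "exp_loss M (\<lambda>\<omega>. G \<omega> + c * u \<omega>) Y < \<infinity>"
    and "enn2real (exp_loss M (\<lambda>\<omega>. G \<omega> + c * u \<omega>) Y) \<le> r"
proof -
  define R where "R \<omega> = logloss (G \<omega>) (Y \<omega>) - c * (u \<omega> * (Y \<omega> - sigmoid (G \<omega>))) + c\<^sup>2 / 8 * u \<omega>"
    for \<omega>
  have pointwise: "logloss (G \<omega> + c * u \<omega>) (Y \<omega>) \<le> R \<omega>" if "\<omega> \<in> space M" for \<omega>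
  proof -
    have "(u \<omega>)\<^sup>2 \<le> u \<omega>"
      using u that by (simp add: power2_eq_square mult_left_le_one_le)
    then have "(c * u \<omega>)\<^sup>2 \<le> c\<^sup>2 * u \<omega>"
      by (simp add: power_mult_distrib mult_left_mono)
    then show ?thesis
      using logloss_add_le[of "G \<omega>" "c * u \<omega>" "Y \<omega>"] by (simp add: R_def algebra_simps)
  qed
  have bounded: "\<bar>u \<omega>\<bar> \<le> 1" "\<bar>u \<omega> * (Y \<omega> - sigmoid (G \<omega>))\<bar> \<le> 1" if "\<omega> \<in> space M" for \<omega>
    using u Y that sigmoid_gt_zero[of "G \<omega>"] sigmoid_less_one[of "G \<omega>"]
    by (auto simp: abs_mult intro!: mult_le_one)
  have int_u: "integrable M u" "integrable M (\<lambda>\<omega>. u \<omega> * (Y \<omega> - sigmoid (G \<omega>)))"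
    using bounded by (auto intro!: integrable_const_bound[where B = 1] AE_I2)
  have int_R: "integrable M R"
    unfolding R_def using int_u integrable_logloss[OF _ _ Y finite] by simp
  have R_nonneg: "0 \<le> R \<omega>" if "\<omega> \<in> space M" for \<omega>
    using pointwise[OF that] logloss_nonneg[of "Y \<omega>" "G \<omega> + c * u \<omega>"] Y that by force
  have "exp_loss M (\<lambda>\<omega>. G \<omega> + c * u \<omega>) Y \<le> (\<integral>\<^sup>+\<omega>. ennreal (R \<omega>) \<partial>M)"
    unfolding exp_loss_def using pointwise by (intro nn_integral_mono ennreal_leI) auto
  also have "\<dots> = ennreal (\<integral>\<omega>. R \<omega> \<partial>M)"
    using R_nonneg by (intro nn_integral_eq_integral int_R AE_I2) auto
  also have "(\<integral>\<omega>. R \<omega> \<partial>M) = r"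
    unfolding R_def r_def using int_u integrable_logloss[OF _ _ Y finite]
    by (simp add: enn2real_exp_loss[OF _ _ Y finite])
  finally have le: "exp_loss M (\<lambda>\<omega>. G \<omega> + c * u \<omega>) Y \<le> ennreal r" .
  then show "exp_loss M (\<lambda>\<omega>. G \<omega> + c * u \<omega>) Y < \<infinity>"
    using le_less_trans by fastforce
  have "0 \<le> r"
    using R_nonneg \<open>(\<integral>\<omega>. R \<omega> \<partial>M) = r\<close> Bochner_Integration.integral_nonneg by metis
  with enn2real_mono[OF le] show "enn2real (exp_loss M (\<lambda>\<omega>. G \<omega> + c * u \<omega>) Y) \<le> r"
    by simp
qed

lemma (in prob_space) calibration_error_sq_le_loss_gap:
  assumes [measurable]: "X \<in> M \<rightarrow>\<^sub>M N" "Y \<in> borel_measurable M" "F \<in> borel_measurable N"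
    and Y: "\<forall>\<omega>\<in>space M. Y \<omega> \<in> {0..1}" and finite: "exp_loss M (\<lambda>\<omega>. F (X \<omega>)) Y < \<infinity>"
    and "\<phi> \<in> W" and \<phi>_meas [measurable]: "(\<lambda>\<omega>. \<phi> (X \<omega>) (sigmoid (F (X \<omega>)))) \<in> borel_measurable M"
    and \<phi>: "\<forall>\<omega>\<in>space M. \<phi> (X \<omega>) (sigmoid (F (X \<omega>))) \<in> {0..1}"
  shows "(\<integral>\<omega>. \<phi> (X \<omega>) (sigmoid (F (X \<omega>))) * (Y \<omega> - sigmoid (F (X \<omega>))) \<partial>M)\<^sup>2
      \<le> (\<integral>\<omega>. \<phi> (X \<omega>) (sigmoid (F (X \<omega>))) \<partial>M)
         * (enn2real (exp_loss M (\<lambda>\<omega>. F (X \<omega>)) Y) - enn2real (opt_loss M X Y F W)) / 2"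
proof (rule sq_le_of_quadratic_bound)
  fix c
  have "(\<lambda>\<omega>. F (X \<omega>)) \<in> borel_measurable M" by measurable
  note add_le = exp_loss_add_le[OF this assms(2) \<phi>_meas Y \<phi> finite, where c = c]
  have "opt_loss M X Y F W
      \<le> exp_loss M (\<lambda>\<omega>. F (X \<omega>) + c * \<phi> (X \<omega>) (sigmoid (F (X \<omega>)))) Y"
    by (rule opt_loss_le_exp_loss_add_learner) fact
  then have "enn2real (opt_loss M X Y F W)
      \<le> enn2real (exp_loss M (\<lambda>\<omega>. F (X \<omega>) + c * \<phi> (X \<omega>) (sigmoid (F (X \<omega>)))) Y)"
    by (rule enn2real_mono) (use add_le(1) in simp)
  also note add_le(2)
  finally show "enn2real (opt_loss M X Y F W) \<le> enn2real (exp_loss M (\<lambda>\<omega>. F (X \<omega>)) Y)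
      - c * (\<integral>\<omega>. \<phi> (X \<omega>) (sigmoid (F (X \<omega>))) * (Y \<omega> - sigmoid (F (X \<omega>))) \<partial>M)
      + c\<^sup>2 / 8 * (\<integral>\<omega>. \<phi> (X \<omega>) (sigmoid (F (X \<omega>))) \<partial>M)" .
  show "0 \<le> (\<integral>\<omega>. \<phi> (X \<omega>) (sigmoid (F (X \<omega>))) \<partial>M)"
    using \<phi> by (intro Bochner_Integration.integral_nonneg) auto
qed

lemma (in prob_space) integral_le_Sup_CT_ratios:
  fixes f :: "'b \<Rightarrow> real"
  assumes [measurable]: "X \<in> M \<rightarrow>\<^sub>M N" "h \<in> borel_measurable N" "f \<in> borel_measurable N"
    and "h \<in> H" and h: "\<forall>x. h x \<in> {0, 1}" and "g \<in> interval_fns"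
    and f: "\<forall>x. 0 < f x \<and> f x < 1" and bdd: "bdd_above (CT_ratios M X H f)"
  shows "(\<integral>\<omega>. h (X \<omega>) * g (f (X \<omega>)) \<partial>M)
      \<le> Sup (CT_ratios M X H f) * (\<integral>\<omega>. h (X \<omega>) * f (X \<omega>) * (1 - f (X \<omega>)) \<partial>M)"
proof -
  have [measurable]: "g \<in> borel_measurable borel"
    using \<open>g \<in> interval_fns\<close> by (rule interval_fns_borel)
  define E where "E = {\<omega> \<in> space M. h (X \<omega>) = 1}"
  define p where "p = (\<integral>\<omega>. h (X \<omega>) * g (f (X \<omega>)) \<partial>M)"
  define v where "v = (\<integral>\<omega>. h (X \<omega>) * f (X \<omega>) * (1 - f (X \<omega>)) \<partial>M)"
  have [measurable]: "E \<in> sets M"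
    unfolding E_def by measurable
  have h_eq: "h (X \<omega>) = indicator E \<omega>" if "\<omega> \<in> space M" for \<omega>
    using h[rule_format, of "X \<omega>"] that by (auto simp: E_def)
  have var_pos: "0 < f x * (1 - f x)" and var_le: "f x * (1 - f x) \<le> 1" for x
    using f[rule_format, of x] by (auto intro: mult_le_one)
  have h_var_bounds: "0 \<le> h x * f x * (1 - f x)" "h x * f x * (1 - f x) \<le> 1" for x
    using h[rule_format, of x] var_pos[of x] var_le[of x] by auto
  have int_v: "integrable M (\<lambda>\<omega>. h (X \<omega>) * f (X \<omega>) * (1 - f (X \<omega>)))"
    using h_var_bounds by (intro integrable_const_bound[where B = 1] AE_I2) auto
  have "0 \<le> v"
    unfolding v_def using h_var_bounds by (intro Bochner_Integration.integral_nonneg) auto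
  then consider "v = 0" | "0 < v" by linarith
  then have "p \<le> Sup (CT_ratios M X H f) * v"
  proof cases
    case 1
    have "AE \<omega> in M. h (X \<omega>) * f (X \<omega>) * (1 - f (X \<omega>)) = 0"
      using 1 h_var_bounds unfolding v_def by (subst (asm) integral_nonneg_eq_0_iff_AE[OF int_v]) auto
    then have "AE \<omega> in M. h (X \<omega>) * g (f (X \<omega>)) = 0"
      by (rule eventually_mono) (metis mult.assoc mult_eq_0_iff var_pos less_irrefl mult_zero_left)
    then have "p = 0"
      unfolding p_def by (rule integral_eq_zero_AE)
    with 1 show ?thesis by simp
  next
    case 2
    have "v \<le> (\<integral>\<omega>. indicator E \<omega> \<partial>M)"
      unfolding v_def
    proof (rule integral_mono[OF int_v])
      show "integrable M (indicator E :: 'a \<Rightarrow> real)"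
        by (simp add: emeasure_eq_measure)
      show "h (X \<omega>) * f (X \<omega>) * (1 - f (X \<omega>)) \<le> indicator E \<omega>" if "\<omega> \<in> space M" for \<omega>
        using h_eq[OF that] var_le[of "X \<omega>"] by (simp add: mult.assoc mult_left_le)
    qed
    also have "\<dots> = measure M E" by simp
    finally have "0 < measure M E" using 2 by linarith
    have "cond_exp_event M (\<lambda>\<omega>. g (f (X \<omega>))) E / cond_exp_event M (\<lambda>\<omega>. f (X \<omega>) * (1 - f (X \<omega>))) E
        = p / v"
      unfolding cond_exp_event_def p_def v_def using \<open>0 < measure M E\<close>
      by (simp add: h_eq mult_ac cong: Bochner_Integration.integral_cong)
    moreover have "cond_exp_event M (\<lambda>\<omega>. g (f (X \<omega>))) E / cond_exp_event M (\<lambda>\<omega>. f (X \<omega>) * (1 - f (X \<omega>))) E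
        \<in> CT_ratios M X H f"
      unfolding CT_ratios_def E_def using \<open>h \<in> H\<close> \<open>g \<in> interval_fns\<close> by blast
    ultimately have "p / v \<le> Sup (CT_ratios M X H f)"
      using cSup_upper[OF _ bdd] by simp
    with 2 show ?thesis by (simp add: field_simps)
  qed
  then show ?thesis unfolding p_def v_def .
qed

lemma abs_le_of_sq_le_half_mult:
  fixes b p A S v :: real
  assumes "b\<^sup>2 \<le> p * A / 2" "p \<le> S * v" "0 \<le> p" "0 \<le> A"
  shows "\<bar>b\<bar> \<le> 2 / sqrt 3 * sqrt S * sqrt A * sqrt v"
proof -
  have "b\<^sup>2 \<le> S * v * A / 2"
    using assms mult_right_mono[OF assms(2) assms(4)] by linarith
  also have "\<dots> \<le> 4 / 3 * (S * A * v)"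
    using assms by (simp add: mult_nonneg_nonneg)
  finally have "sqrt (b\<^sup>2) \<le> sqrt (4 / 3) * sqrt (S * A * v)"
    by (metis real_sqrt_le_mono real_sqrt_mult)
  then show ?thesis
    by (simp add: real_sqrt_mult real_sqrt_divide mult_ac)
qed

lemma (in prob_space) multicalibrated_of_opt_loss_gap:
  assumes [measurable]: "X \<in> M \<rightarrow>\<^sub>M N" "Y \<in> borel_measurable M" "F \<in> borel_measurable N"
    and Y: "\<forall>\<omega>\<in>space M. Y \<omega> \<in> {0..1}" and finite: "exp_loss M (\<lambda>\<omega>. F (X \<omega>)) Y < \<infinity>"
    and H: "\<forall>h\<in>H. h \<in> borel_measurable N \<and> (\<forall>x. h x \<in> {0, 1})"
    and W: "\<forall>h\<in>H. \<forall>g\<in>interval_fns. (\<lambda>x v. h x * g v) \<in> W"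
    and bdd: "bdd_above (CT_ratios M X H (sigmoid \<circ> F))"
    and gap: "enn2real (exp_loss M (\<lambda>\<omega>. F (X \<omega>)) Y) - enn2real (opt_loss M X Y F W) \<le> A"
  shows "multicalibrated M X Y H (sigmoid \<circ> F)
      (2 / sqrt 3 * sqrt (Sup (CT_ratios M X H (sigmoid \<circ> F))) * sqrt A)"
  unfolding multicalibrated_def o_def
proof (intro ballI)
  fix h g assume "h \<in> H" "g \<in> interval_fns"
  with H interval_fns_borel interval_fns_range
  have [measurable]: "h \<in> borel_measurable N" "g \<in> borel_measurable borel"
    and h: "\<forall>x. h x \<in> {0, 1}" and g: "\<And>v. g v \<in> {0, 1}"
    by blast+
  let ?u = "\<lambda>\<omega>. h (X \<omega>) * g (sigmoid (F (X \<omega>)))"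
  let ?v = "\<lambda>\<omega>. h (X \<omega>) * sigmoid (F (X \<omega>)) * (1 - sigmoid (F (X \<omega>)))"
  have u_range: "\<forall>\<omega>\<in>space M. ?u \<omega> \<in> {0..1}"
    using h g by (metis atLeastAtMost_iff empty_iff insert_iff mult_zero_left mult_1 order_refl zero_le_one)
  have "enn2real (opt_loss M X Y F W) \<le> enn2real (exp_loss M (\<lambda>\<omega>. F (X \<omega>)) Y)"
    using finite by (intro enn2real_mono opt_loss_le_exp_loss) simp
  with gap have "0 \<le> A" by linarith
  have "(\<integral>\<omega>. ?u \<omega> * (Y \<omega> - sigmoid (F (X \<omega>))) \<partial>M)\<^sup>2
      \<le> (\<integral>\<omega>. ?u \<omega> \<partial>M)
        * (enn2real (exp_loss M (\<lambda>\<omega>. F (X \<omega>)) Y) - enn2real (opt_loss M X Y F W)) / 2"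
    using W \<open>h \<in> H\<close> \<open>g \<in> interval_fns\<close> u_range
    by (intro calibration_error_sq_le_loss_gap[where \<phi> = "\<lambda>x v. h x * g v", OF assms(1-3) Y finite])
      auto
  also have "\<dots> \<le> (\<integral>\<omega>. ?u \<omega> \<partial>M) * A / 2"
    using gap u_range by (intro divide_right_mono mult_left_mono Bochner_Integration.integral_nonneg) auto
  finally have sq: "(\<integral>\<omega>. ?u \<omega> * (Y \<omega> - sigmoid (F (X \<omega>))) \<partial>M)\<^sup>2 \<le> (\<integral>\<omega>. ?u \<omega> \<partial>M) * A / 2" .
  have "(\<lambda>x. sigmoid (F x)) \<in> borel_measurable N" "\<forall>x. 0 < sigmoid (F x) \<and> sigmoid (F x) < 1"
    by (simp_all add: sigmoid_gt_zero sigmoid_less_one)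
  from integral_le_Sup_CT_ratios[OF assms(1) _ this(1) \<open>h \<in> H\<close> h \<open>g \<in> interval_fns\<close> this(2)] bdd
  have ratio: "(\<integral>\<omega>. ?u \<omega> \<partial>M) \<le> Sup (CT_ratios M X H (\<lambda>x. sigmoid (F x))) * (\<integral>\<omega>. ?v \<omega> \<partial>M)"
    by (simp add: o_def)
  show "\<bar>\<integral>\<omega>. ?u \<omega> * (Y \<omega> - sigmoid (F (X \<omega>))) \<partial>M\<bar>
      \<le> 2 / sqrt 3 * sqrt (Sup (CT_ratios M X H (\<lambda>x. sigmoid (F x)))) * sqrt A * sqrt (\<integral>\<omega>. ?v \<omega> \<partial>M)"
    using u_range \<open>0 \<le> A\<close>
    by (intro abs_le_of_sq_le_half_mult[OF sq ratio] Bochner_Integration.integral_nonneg) auto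
qed

theorem propositionA3:
  fixes M :: "'w measure" and N :: "'a measure"
    and X :: "'w \<Rightarrow> 'a" and Y :: "'w \<Rightarrow> real"
    and H :: "('a \<Rightarrow> real) set"
    and FT FT1 :: "'a \<Rightarrow> real"
    and W :: "('a \<Rightarrow> real \<Rightarrow> real) set"
  assumes M: "prob_space M"
    and X: "X \<in> M \<rightarrow>\<^sub>M N"
    and Y: "Y \<in> borel_measurable M" "\<forall>\<omega>\<in>space M. Y \<omega> \<in> {0, 1}"
    and H: "\<forall>h\<in>H. h \<in> borel_measurable N \<and> (\<forall>x. h x \<in> {0, 1})"
    and F: "FT \<in> borel_measurable N" "FT1 \<in> borel_measurable N"
    and W: "\<forall>h\<in>H. \<forall>g\<in>interval_fns. (\<lambda>x v. h x * g v) \<in> W"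
    and finL: "exp_loss M (\<lambda>\<omega>. FT (X \<omega>)) Y < \<infinity>" "exp_loss M (\<lambda>\<omega>. FT1 (X \<omega>)) Y < \<infinity>"
    and intD: "integrable M (\<lambda>\<omega>. FT1 (X \<omega>) - FT (X \<omega>))"
      "integrable M (\<lambda>\<omega>. (FT1 (X \<omega>) - FT (X \<omega>))\<^sup>2)"
    and bdd: "bdd_above (CT_ratios M X H (sigmoid \<circ> FT))"
  shows "let fT = sigmoid \<circ> FT;
             CT = sqrt (Sup (CT_ratios M X H fT));
             \<epsilon>T = enn2real (exp_loss M (\<lambda>\<omega>. FT1 (X \<omega>)) Y) - enn2real (opt_loss M X Y FT W);
             \<alpha> = 2 / sqrt 3 * CT *
                 sqrt (2 * (\<integral>\<omega>. \<bar>FT1 (X \<omega>) - FT (X \<omega>)\<bar> \<partial>M)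
                       + 1/8 * (\<integral>\<omega>. (FT1 (X \<omega>) - FT (X \<omega>))\<^sup>2 \<partial>M) + \<epsilon>T)
         in multicalibrated M X Y H fT \<alpha>"
proof -
  interpret prob_space M by (rule M)
  note [measurable] = X Y(1) F
  have Y01: "\<forall>\<omega>\<in>space M. Y \<omega> \<in> {0..1}" using Y(2) by auto
  define L0 where "L0 = enn2real (exp_loss M (\<lambda>\<omega>. FT (X \<omega>)) Y)"
  define L1 where "L1 = enn2real (exp_loss M (\<lambda>\<omega>. FT1 (X \<omega>)) Y)"
  define Lopt where "Lopt = enn2real (opt_loss M X Y FT W)"
  define A where "A = 2 * (\<integral>\<omega>. \<bar>FT1 (X \<omega>) - FT (X \<omega>)\<bar> \<partial>M)
    + 1/8 * (\<integral>\<omega>. (FT1 (X \<omega>) - FT (X \<omega>))\<^sup>2 \<partial>M) + (L1 - Lopt)"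
  have "L0 - L1 \<le> (\<integral>\<omega>. \<bar>FT1 (X \<omega>) - FT (X \<omega>)\<bar> \<partial>M)"
    unfolding L0_def L1_def by (rule exp_loss_diff_le[OF _ _ _ Y01 finL intD(1)]) measurable
  \<comment> \<open>The quadratic term only enlarges \<alpha>.\<close>
  moreover have "0 \<le> (\<integral>\<omega>. \<bar>FT1 (X \<omega>) - FT (X \<omega>)\<bar> \<partial>M)"
    "0 \<le> (\<integral>\<omega>. (FT1 (X \<omega>) - FT (X \<omega>))\<^sup>2 \<partial>M)"
    by simp_all
  ultimately have "L0 - Lopt \<le> A"
    unfolding A_def by linarith
  from multicalibrated_of_opt_loss_gap[OF X Y(1) F(1) Y01 finL(1) H W bdd this[unfolded L0_def Lopt_def]]
  show ?thesis
    unfolding Let_def A_def L1_def Lopt_def .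
qed

end
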